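(* Let $\Xi:M_p\to M_q$ be an entanglement-breaking channel $\Xi(X)=\sum_{i=1}^l\mathrm{Tr}[XM_i]\sigma_i$, where $(M_i)_{i=1}^l$ is a POVM on $\mathbb C^p$ with $\|M_i\|_\infty=1$ for all $i$ and $\sigma_i\in D_q$, and let $\Psi:M_N\to M_k$ be any quantum channel. Then $$K_{\Xi\otimes\Psi}=K_\Xi\otimes K_\Psi,$$ where $K_{\Xi\otimes\Psi}=(\Xi\otimes\Psi)(D_{pN})$, $K_\Xi=\Xi(D_p)$, $K_\Psi=\Psi(D_N)$, and $K_\Xi\otimes K_\Psi$ denotes the smallest convex set containing all $X\otimes Y$ with $X\in K_\Xi$, $Y\in K_\Psi$.
   Context: A POVM is a family of positive semidefinite matrices summing to the identity; $D_d$ is the set of $d\times d$ density matrices; $\|\cdot\|_\infty$ is the operator norm. *)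

theory Defs
  imports "HOL-Analysis.Analysis"
begin

type_synonym 'n cmat = "complex^'n^'n"

definition msc :: "complex \<Rightarrow> ('n::finite) cmat \<Rightarrow> 'n cmat" where
  "msc c A = (\<chi> i j. c * A $ i $ j)"

definition psd :: "('n::finite) cmat \<Rightarrow> bool" where
  "psd A \<longleftrightarrow> (\<forall>v::complex^'n.
      let z = (\<Sum>i\<in>UNIV. cnj (v $ i) * (A *v v) $ i) in Im z = 0 \<and> Re z \<ge> 0)"

definition dens :: "('n::finite) cmat set" where
  "dens = {\<rho>. psd \<rho> \<and> trace \<rho> = 1}"

definition opnorm :: "('n::finite) cmat \<Rightarrow> real" where
  "opnorm A = onorm (\<lambda>v::complex^'n. A *v v)"

definition povm :: "nat \<Rightarrow> (nat \<Rightarrow> ('n::finite) cmat) \<Rightarrow> bool" where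
  "povm l M \<longleftrightarrow> (\<forall>t<l. psd (M t)) \<and> (\<Sum>t<l. M t) = mat 1"

text \<open>Kronecker product of matrices; index (a,b) corresponds to e_a \<otimes> e_b.\<close>
definition kron :: "('a::finite) cmat \<Rightarrow> ('b::finite) cmat \<Rightarrow> ('a \<times> 'b) cmat" where
  "kron A B = (\<chi> x y. A $ fst x $ fst y * B $ snd x $ snd y)"

definition munit :: "('n::finite) \<Rightarrow> 'n \<Rightarrow> 'n cmat" where
  "munit a b = (\<chi> i j. if i = a \<and> j = b then 1 else 0)"

definition clin :: "(('n::finite) cmat \<Rightarrow> ('m::finite) cmat) \<Rightarrow> bool" where
  "clin \<Phi> \<longleftrightarrow> (\<forall>A B. \<Phi> (A + B) = \<Phi> A + \<Phi> B) \<and> (\<forall>c A. \<Phi> (msc c A) = msc c (\<Phi> A))"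

text \<open>Matrices in M_k \<otimes> M_n for arbitrary k::nat, represented as functions on
  (nat \<times> 'n), where only first indices < k are relevant.\<close>
definition psd_ext :: "nat \<Rightarrow> (nat \<times> ('n::finite) \<Rightarrow> nat \<times> 'n \<Rightarrow> complex) \<Rightarrow> bool" where
  "psd_ext k X \<longleftrightarrow> (\<forall>v :: nat \<times> 'n \<Rightarrow> complex.
     let z = (\<Sum>x\<in>{..<k} \<times> UNIV. \<Sum>y\<in>{..<k} \<times> UNIV. cnj (v x) * X x y * v y)
     in Im z = 0 \<and> Re z \<ge> 0)"

text \<open>(id_k \<otimes> \<Phi>) applied blockwise.\<close>
definition ampl :: "(('n::finite) cmat \<Rightarrow> ('m::finite) cmat) \<Rightarrow>
    (nat \<times> 'n \<Rightarrow> nat \<times> 'n \<Rightarrow> complex) \<Rightarrow> (nat \<times> 'm \<Rightarrow> nat \<times> 'm \<Rightarrow> complex)" where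
  "ampl \<Phi> X = (\<lambda>(a,c) (a',c'). \<Phi> (\<chi> b b'. X (a,b) (a',b')) $ c $ c')"

definition cp :: "(('n::finite) cmat \<Rightarrow> ('m::finite) cmat) \<Rightarrow> bool" where
  "cp \<Phi> \<longleftrightarrow> (\<forall>k X. psd_ext k X \<longrightarrow> psd_ext k (ampl \<Phi> X))"

definition tp :: "(('n::finite) cmat \<Rightarrow> ('m::finite) cmat) \<Rightarrow> bool" where
  "tp \<Phi> \<longleftrightarrow> (\<forall>A. trace (\<Phi> A) = trace A)"

definition channel :: "(('n::finite) cmat \<Rightarrow> ('m::finite) cmat) \<Rightarrow> bool" where
  "channel \<Phi> \<longleftrightarrow> clin \<Phi> \<and> cp \<Phi> \<and> tp \<Phi>"

text \<open>Tensor product of linear maps, defined as the linear extension of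
  A \<otimes> B \<mapsto> \<Phi> A \<otimes> \<Psi> B via matrix units.\<close>
definition tensor_map :: "(('a::finite) cmat \<Rightarrow> ('c::finite) cmat) \<Rightarrow> (('b::finite) cmat \<Rightarrow> ('d::finite) cmat)
    \<Rightarrow> ('a \<times> 'b) cmat \<Rightarrow> ('c \<times> 'd) cmat" where
  "tensor_map \<Phi> \<Psi> X = (\<Sum>a\<in>UNIV. \<Sum>a'\<in>UNIV. \<Sum>b\<in>UNIV. \<Sum>b'\<in>UNIV.
      msc (X $ (a,b) $ (a',b')) (kron (\<Phi> (munit a a')) (\<Psi> (munit b b'))))"

definition tensor_set :: "('a::finite) cmat set \<Rightarrow> ('b::finite) cmat set \<Rightarrow> ('a \<times> 'b) cmat set" where
  "tensor_set K L = convex hull {kron X Y | X Y. X \<in> K \<and> Y \<in> L}"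

end

theory Submission
  imports Defs
begin

text \<open>Every POVM element \<open>M\<^sub>t\<close> of norm one has a unit vector \<open>v\<close> with \<open>\<langle>v, M\<^sub>t v\<rangle> = 1\<close>;
  since the \<open>M\<^sub>s\<close> are positive and sum to the identity, \<open>\<langle>v, M\<^sub>s v\<rangle> = 0\<close> for \<open>s \<noteq> t\<close>,
  so \<open>\<Xi>(vv\<^sup>*) = \<sigma>\<^sub>t\<close> and every \<open>\<sigma>\<^sub>t\<close> lies in \<open>K\<^sub>\<Xi>\<close>. On the other hand
  \<open>(\<Xi> \<otimes> \<Psi>)(\<rho>) = \<Sum>\<^sub>t \<sigma>\<^sub>t \<otimes> \<Psi>(\<tau>\<^sub>t)\<close> with \<open>\<tau>\<^sub>t = Tr\<^sub>1[\<rho> (M\<^sub>t \<otimes> 1)]\<close> positive of total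
  trace one, which exhibits \<open>(\<Xi> \<otimes> \<Psi>)(\<rho>)\<close> as a convex combination of products
  \<open>\<sigma>\<^sub>t \<otimes> \<Psi>(\<tau>\<^sub>t / Tr \<tau>\<^sub>t)\<close>. The reverse inclusion holds for any pair of linear maps,
  because \<open>(\<Xi> \<otimes> \<Psi>)(\<rho> \<otimes> \<tau>) = \<Xi>(\<rho>) \<otimes> \<Psi>(\<tau>)\<close> and the image of the convex set \<open>D\<^sub>p\<^sub>N\<close>
  is convex.\<close>

section \<open>Positive semidefinite matrices\<close>

definition qf :: "('n::finite) cmat \<Rightarrow> complex^'n \<Rightarrow> complex^'n \<Rightarrow> complex" where
  "qf A u v = (\<Sum>i\<in>UNIV. \<Sum>j\<in>UNIV. cnj (u$i) * A$i$j * v$j)"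

lemma psd_qf: "psd A \<longleftrightarrow> (\<forall>v. Im (qf A v v) = 0 \<and> Re (qf A v v) \<ge> 0)"
  unfolding psd_def qf_def matrix_vector_mult_def Let_def
  by (simp add: sum_distrib_left mult.assoc)

lemma qf_add_left: "qf A (u + u') v = qf A u v + qf A u' v"
  unfolding qf_def by (simp add: algebra_simps sum.distrib)

lemma qf_add_right: "qf A u (v + v') = qf A u v + qf A u v'"
  unfolding qf_def by (simp add: algebra_simps sum.distrib)

lemma qf_scale_left: "qf A (c *s u) v = cnj c * qf A u v"
  unfolding qf_def by (simp add: algebra_simps sum_distrib_left)

lemma qf_scale_right: "qf A u (c *s v) = c * qf A u v"
  unfolding qf_def by (simp add: algebra_simps sum_distrib_left)

lemma qf_add_mat: "qf (A + B) u v = qf A u v + qf B u v"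
  unfolding qf_def by (simp add: algebra_simps sum.distrib)

lemma qf_diff_mat: "qf (A - B) u v = qf A u v - qf B u v"
  unfolding qf_def by (simp add: algebra_simps sum_subtractf)

lemma qf_sum_mat: "qf (\<Sum>k\<in>S. A k) u v = (\<Sum>k\<in>S. qf (A k) u v)"
  by (induction S rule: infinite_finite_induct) (auto simp: qf_add_mat qf_def[of 0])

lemma qf_scaleR_mat: "qf (c *\<^sub>R A) u v = complex_of_real c * qf A u v"
  unfolding qf_def by (simp add: scaleR_conv_of_real[where 'a=complex] sum_distrib_left mult_ac)

lemma mult_delta_right: "(x::'a::mult_zero) * (if P then y else 0) = (if P then x * y else 0)"
  by simp

lemma mult_delta_left: "(if P then y else 0) * (x::'a::mult_zero) = (if P then y * x else 0)"
  by simp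

lemma qf_axis: "qf A (axis i a) (axis j b) = cnj a * A$i$j * b"
  unfolding qf_def axis_def
  by (simp add: mult_delta_left mult_delta_right if_distrib[where f=cnj] cong: if_cong)

lemma qf_axis_right: "qf A w (axis i 1) = (\<Sum>a\<in>UNIV. cnj (w$a) * A$a$i)"
  unfolding qf_def axis_def by (simp add: mult_delta_left mult_delta_right cong: if_cong)

lemma qf_mat_1: "qf (mat 1) u u = (\<Sum>i\<in>UNIV. cnj (u$i) * u$i)"
  unfolding qf_def mat_def by (simp add: mult_delta_left mult_delta_right cong: if_cong)
lemma qf_mat_1_eq_norm: "qf (mat 1) u u = complex_of_real ((norm u)^2)"
proof -
  have "(norm u)^2 = (\<Sum>i\<in>UNIV. (cmod (u$i))^2)"
    unfolding norm_vec_def L2_set_def by (simp add: sum_nonneg)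
  then have "complex_of_real ((norm u)^2) = (\<Sum>i\<in>UNIV. complex_of_real ((cmod (u$i))^2))"
    by (simp only: of_real_sum)
  then show ?thesis
    unfolding qf_mat_1 by (simp only: complex_norm_square mult.commute)
qed

lemma psd_diag: "psd A \<Longrightarrow> Im (A$i$i) = 0 \<and> Re (A$i$i) \<ge> 0"
  using qf_axis[of A i 1 i 1] unfolding psd_qf by (metis complex_cnj_one mult_1 mult_1_right)

lemma psd_hermitian:
  assumes "psd A" shows "A$j$i = cnj (A$i$j)"
proof -
  have "qf A (axis i 1 + c *s axis j 1) (axis i 1 + c *s axis j 1)
      = A$i$i + c * A$i$j + cnj c * A$j$i + cnj c * c * A$j$j" for c
    by (simp add: qf_add_left qf_add_right qf_scale_left qf_scale_right qf_axis algebra_simps)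
  then have real: "Im (A$i$i + c * A$i$j + cnj c * A$j$i + cnj c * c * A$j$j) = 0" for c
    using assms unfolding psd_qf by metis
  have "Im (A$i$i) = 0" "Im (A$j$j) = 0" using psd_diag[OF assms] by auto
  with real[of 1] have "Im (A$i$j) + Im (A$j$i) = 0" by simp
  moreover from real[of \<i>] \<open>Im (A$i$i) = 0\<close> \<open>Im (A$j$j) = 0\<close>
  have "Re (A$i$j) - Re (A$j$i) = 0" by (simp add: algebra_simps)
  ultimately show ?thesis by (simp add: complex_eq_iff)
qed

lemma qf_swap: assumes "psd A" shows "qf A v u = cnj (qf A u v)"
proof -
  have "cnj (qf A u v) = (\<Sum>i\<in>UNIV. \<Sum>j\<in>UNIV. u$i * A$j$i * cnj (v$j))"
    by (simp add: qf_def psd_hermitian[OF assms, symmetric])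
  also have "\<dots> = (\<Sum>j\<in>UNIV. \<Sum>i\<in>UNIV. u$i * A$j$i * cnj (v$j))"
    by (rule sum.swap)
  also have "\<dots> = qf A v u"
    unfolding qf_def by (simp add: mult_ac)
  finally show ?thesis by simp
qed

text \<open>The value of the nonnegative form \<open>qf A\<close> at \<open>u + s v\<close> with \<open>s = -t cnj (qf A u v)\<close>.\<close>
lemma psd_quadratic_nonneg:
  assumes "psd A"
  shows "0 \<le> Re (qf A u u) - 2 * t * (cmod (qf A u v))^2 + t^2 * (cmod (qf A u v))^2 * Re (qf A v v)"
proof -
  define b where "b = qf A u v"
  define s where "s = - (complex_of_real t * cnj b)"
  have nb: "b * cnj b = (complex_of_real (cmod b))^2"
    using complex_norm_square[of b] by simp
  have "s * b = - complex_of_real (t * (cmod b)^2)"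
    "cnj s * cnj b = - complex_of_real (t * (cmod b)^2)"
    unfolding s_def by (simp_all add: nb[symmetric] mult.commute mult.left_commute)
  moreover have "cnj s * s = (complex_of_real t)^2 * (b * cnj b)"
    unfolding s_def by (simp add: power2_eq_square mult_ac)
  then have "cnj s * s = complex_of_real (t^2 * (cmod b)^2)"
    unfolding nb by simp
  moreover have "qf A (u + s *s v) (u + s *s v) = qf A u u + s * b + cnj s * cnj b + cnj s * s * qf A v v"
    using qf_swap[OF assms, where u=u and v=v]
    by (simp add: qf_add_left qf_add_right qf_scale_left qf_scale_right flip: b_def)
       (simp add: algebra_simps)
  moreover have "Re (qf A (u + s *s v) (u + s *s v)) \<ge> 0"
    using assms psd_qf by blast
  ultimately show ?thesis unfolding b_def by simp
qed

lemma psd_cauchy_schwarz: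
  assumes "psd A"
  shows "(cmod (qf A u v))^2 \<le> Re (qf A u u) * Re (qf A v v)"
proof -
  define b where "b = qf A u v"
  define P where "P = Re (qf A u u)"
  define Q where "Q = Re (qf A v v)"
  have quadratic: "0 \<le> P - 2 * t * (cmod b)^2 + t^2 * (cmod b)^2 * Q" for t
    unfolding b_def P_def Q_def by (rule psd_quadratic_nonneg[OF assms])
  have "P \<ge> 0" "Q \<ge> 0" using assms psd_qf P_def Q_def by auto
  show ?thesis
  proof (cases "Q = 0")
    case True
    show ?thesis
    proof (cases "b = 0")
      case True then show ?thesis using \<open>P \<ge> 0\<close> \<open>Q \<ge> 0\<close> by (simp add: b_def flip: P_def Q_def)
    next
      case False
      with quadratic[of "(P + 1) / (2 * (cmod b)^2)"] \<open>Q = 0\<close> show ?thesis by simp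
    qed
  next
    case False
    with \<open>Q \<ge> 0\<close> have "Q > 0" by simp
    with quadratic[of "1 / Q"] have "0 \<le> P - (cmod b)^2 / Q"
      by (simp add: power2_eq_square field_simps)
    with \<open>Q > 0\<close> show ?thesis by (simp add: b_def P_def Q_def field_simps)
  qed
qed

lemma psd_zero_row:
  assumes "psd A" "A$i$i = 0" shows "A$i$j = 0" "A$j$i = 0"
proof -
  have "(cmod (A$i$j))^2 \<le> Re (A$i$i) * Re (A$j$j)"
    using psd_cauchy_schwarz[OF assms(1), of "axis i 1" "axis j 1"] by (simp add: qf_axis)
  then show "A$i$j = 0" using assms(2) by simp
  then show "A$j$i = 0" using psd_hermitian[OF assms(1), of i j] by simp
qed

lemma psd_add: "psd A \<Longrightarrow> psd B \<Longrightarrow> psd (A + B)"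
  unfolding psd_qf qf_add_mat by simp

lemma psd_sum: "(\<And>k. k \<in> S \<Longrightarrow> psd (A k)) \<Longrightarrow> psd (\<Sum>k\<in>S. A k)"
  unfolding psd_qf qf_sum_mat by (simp add: sum_nonneg)

lemma psd_scaleR: "psd A \<Longrightarrow> c \<ge> 0 \<Longrightarrow> psd (c *\<^sub>R A)"
  unfolding psd_qf qf_scaleR_mat by simp

lemma psd_trace_nonneg: assumes "psd A" shows "Im (trace A) = 0" "Re (trace A) \<ge> 0"
  using psd_diag[OF assms] unfolding trace_def by (simp_all add: sum_nonneg)

lemma psd_trace_eq_0:
  assumes "psd A" "trace A = 0" shows "A = 0"
proof -
  have diag: "Im (A$i$i) = 0" "Re (A$i$i) \<ge> 0" for i using psd_diag[OF assms(1)] by auto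
  have "(\<Sum>i\<in>UNIV. Re (A$i$i)) = 0"
    using arg_cong[OF assms(2), of Re] unfolding trace_def by simp
  then have "Re (A$i$i) = 0" for i using diag sum_nonneg_eq_0_iff[of UNIV "\<lambda>i. Re (A$i$i)"] by simp
  then have "A$i$i = 0" for i using diag by (simp add: complex_eq_iff)
  then have "A$i$j = 0" for i j using psd_zero_row(1)[OF assms(1)] by blast
  then show ?thesis by (simp add: vec_eq_iff)
qed

section \<open>Rank-one decomposition\<close>

definition outer :: "complex^'n \<Rightarrow> ('n::finite) cmat" where
  "outer x = (\<chi> a b. x$a * cnj (x$b))"

lemma qf_outer: "qf (outer x) u v = (\<Sum>a\<in>UNIV. cnj (u$a) * x$a) * (\<Sum>b\<in>UNIV. cnj (x$b) * v$b)"
  unfolding qf_def outer_def sum_product by (intro sum.cong refl) (simp add: mult_ac)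

lemma qf_outer_diag: "qf (outer x) u u = complex_of_real ((cmod (\<Sum>a\<in>UNIV. cnj (u$a) * x$a))^2)"
  unfolding qf_outer complex_norm_square by (simp add: cnj_sum mult.commute)

lemma psd_outer: "psd (outer x)"
  unfolding psd_qf qf_outer_diag by simp

lemma trace_outer: "trace (outer v) = qf (mat 1) v v"
  unfolding trace_def outer_def qf_mat_1 by (simp add: mult.commute)

lemma trace_outer_mult: "trace (outer v ** A) = qf A v v"
proof -
  have "trace (outer v ** A) = (\<Sum>i\<in>UNIV. \<Sum>k\<in>UNIV. v$i * cnj (v$k) * A$k$i)"
    unfolding trace_def matrix_matrix_mult_def outer_def by simp
  also have "\<dots> = (\<Sum>k\<in>UNIV. \<Sum>i\<in>UNIV. v$i * cnj (v$k) * A$k$i)"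
    by (rule sum.swap)
  also have "\<dots> = qf A v v"
    unfolding qf_def by (simp add: mult_ac)
  finally show ?thesis .
qed

lemma outer_in_dens: "norm v = 1 \<Longrightarrow> outer v \<in> dens"
  unfolding dens_def by (simp add: psd_outer trace_outer qf_mat_1_eq_norm)

lemma dens_nonempty: "dens \<noteq> {}"
  using outer_in_dens[of "axis undefined 1"] norm_Basis[of "axis undefined (1::complex)"]
  by (auto simp: Basis_vec_def)

text \<open>One step of a Cholesky factorisation. When \<open>A$i$i = 0\<close>, \<open>csqrt 0 = 0\<close> and division
  by zero make \<open>chol_col A i = 0\<close>, which is the right choice there since row and column \<open>i\<close>
  of a positive \<open>A\<close> then vanish.\<close>
definition chol_col :: "('n::finite) cmat \<Rightarrow> 'n \<Rightarrow> complex^'n" where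
  "chol_col A i = (\<chi> a. A$a$i / csqrt (A$i$i))"

lemma outer_chol_col:
  assumes "psd A" shows "outer (chol_col A i) $ a $ b = A$a$i * A$i$b / A$i$i"
proof -
  define d where "d = Re (A$i$i)"
  have Aii: "A$i$i = complex_of_real d" "d \<ge> 0"
    using psd_diag[OF assms, of i] unfolding d_def by (simp_all add: complex_eq_iff)
  have "csqrt (A$i$i) * cnj (csqrt (A$i$i)) = A$i$i"
    unfolding Aii(1) csqrt_of_real[OF Aii(2)] using Aii(2) by (simp flip: of_real_mult)
  moreover have "outer (chol_col A i) $ a $ b = A$a$i * A$i$b / (csqrt (A$i$i) * cnj (csqrt (A$i$i)))"
    unfolding outer_def chol_col_def using psd_hermitian[OF assms, of b i] by simp
  ultimately show ?thesis by simp
qed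

lemma psd_diff_outer_chol_col:
  assumes "psd A" shows "psd (A - outer (chol_col A i))"
  unfolding psd_qf
proof
  fix w
  define d where "d = Re (A$i$i)"
  have Aii: "A$i$i = complex_of_real d" "d \<ge> 0"
    using psd_diag[OF assms, of i] unfolding d_def by (simp_all add: complex_eq_iff)
  define q where "q = qf A w (axis i 1)"
  have "(\<Sum>a\<in>UNIV. cnj (w$a) * chol_col A i $ a) = q / complex_of_real (sqrt d)"
    unfolding chol_col_def q_def qf_axis_right Aii(1) csqrt_of_real[OF Aii(2)]
    by (simp add: sum_divide_distrib)
  then have "qf (outer (chol_col A i)) w w = complex_of_real ((cmod (q / complex_of_real (sqrt d)))^2)"
    by (simp only: qf_outer_diag)
  also have "\<dots> = complex_of_real ((cmod q)^2 / d)"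
    using Aii(2) by (simp add: norm_divide power_divide)
  finally have qf_outer_chol: "qf (outer (chol_col A i)) w w = complex_of_real ((cmod q)^2 / d)" .
  have "(cmod q)^2 \<le> Re (qf A w w) * d"
    using psd_cauchy_schwarz[OF assms, of w "axis i 1"] by (simp add: q_def qf_axis d_def)
  moreover have "Im (qf A w w) = 0" "Re (qf A w w) \<ge> 0"
    using assms psd_qf by blast+
  ultimately have "(cmod q)^2 / d \<le> Re (qf A w w)"
    using Aii(2) by (cases "d = 0") (simp_all add: divide_le_eq)
  then show "Im (qf (A - outer (chol_col A i)) w w) = 0 \<and> 0 \<le> Re (qf (A - outer (chol_col A i)) w w)"
    using \<open>Im (qf A w w) = 0\<close> unfolding qf_diff_mat qf_outer_chol by simp
qed

lemma psd_diff_outer_chol_col_eq_0: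
  assumes "psd A" shows "(A - outer (chol_col A i))$i$b = 0" "(A - outer (chol_col A i))$b$i = 0"
proof -
  have zero_row: "A$i$b = 0" "A$b$i = 0" if "A$i$i = 0"
    using psd_zero_row[OF assms that] by blast+
  show "(A - outer (chol_col A i))$i$b = 0" "(A - outer (chol_col A i))$b$i = 0"
    using outer_chol_col[OF assms] zero_row by (cases "A$i$i = 0"; simp)+
qed

lemma psd_sum_outer_on:
  fixes A :: "('n::finite) cmat"
  assumes "finite S" "psd A" "\<And>a b. A$a$b \<noteq> 0 \<Longrightarrow> a \<in> S \<and> b \<in> S"
  shows "\<exists>x. A = (\<Sum>k\<in>S. outer (x k))"
  using assms
proof (induction S arbitrary: A rule: finite_induct)
  case empty
  then have "A = 0" by (auto simp: vec_eq_iff)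
  then show ?case by simp
next
  case (insert i S)
  define y where "y = chol_col A i"
  have "a \<in> S \<and> b \<in> S" if "(A - outer y)$a$b \<noteq> 0" for a b
  proof -
    have "a \<noteq> i" "b \<noteq> i"
      using that psd_diff_outer_chol_col_eq_0[OF insert.prems(1)] unfolding y_def by metis+
    moreover have "A$a$b \<noteq> 0 \<or> A$a$i \<noteq> 0 \<and> A$i$b \<noteq> 0"
      using that outer_chol_col[OF insert.prems(1)] unfolding y_def by auto
    ultimately show ?thesis
      using insert.prems(2) by blast
  qed
  then obtain x where x: "A - outer y = (\<Sum>k\<in>S. outer (x k))"
    using insert.IH psd_diff_outer_chol_col[OF insert.prems(1)] unfolding y_def by blast
  have "(\<Sum>k\<in>S. outer ((x(i:=y)) k)) = (\<Sum>k\<in>S. outer (x k))"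
    using insert.hyps by (intro sum.cong) auto
  then have "(\<Sum>k\<in>insert i S. outer ((x(i:=y)) k)) = outer y + (\<Sum>k\<in>S. outer (x k))"
    using insert.hyps by simp
  then show ?case
    unfolding x[symmetric] by (metis add.commute diff_add_cancel)
qed

lemma psd_sum_outer: "psd A \<Longrightarrow> \<exists>x. A = (\<Sum>k\<in>(UNIV::'n set). outer (x k))"
  for A :: "('n::finite) cmat"
  using psd_sum_outer_on[of UNIV A] by simp

section \<open>Kronecker products\<close>

lemma msc_nth [simp]: "msc c A $ i $ j = c * A$i$j"
  unfolding msc_def by simp

lemma kron_nth [simp]: "kron A B $ x $ y = A$fst x$fst y * B$snd x$snd y"
  unfolding kron_def by simp

lemma msc_mult: "msc a (msc b A) = msc (a * b) A"
  by (simp add: vec_eq_iff algebra_simps)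

lemma msc_of_real: "msc (complex_of_real c) A = c *\<^sub>R A"
  by (simp add: vec_eq_iff scaleR_conv_of_real[where 'a=complex])

lemma msc_1 [simp]: "msc 1 A = A"
  by (simp add: vec_eq_iff)

lemma msc_0 [simp]: "msc 0 A = 0"
  by (simp add: vec_eq_iff)

lemma msc_add_left: "msc (a + b) A = msc a A + msc b A"
  by (simp add: vec_eq_iff algebra_simps)

lemma msc_sum_right: "msc a (\<Sum>k\<in>S. A k) = (\<Sum>k\<in>S. msc a (A k))"
  by (simp add: vec_eq_iff sum_distrib_left)

lemma kron_sum_left: "kron (\<Sum>k\<in>S. A k) B = (\<Sum>k\<in>S. kron (A k) B)"
  by (simp add: vec_eq_iff sum_distrib_right)

lemma kron_sum_right: "kron A (\<Sum>k\<in>S. B k) = (\<Sum>k\<in>S. kron A (B k))"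
  by (simp add: vec_eq_iff sum_distrib_left)

lemma kron_msc_left: "kron (msc c A) B = msc c (kron A B)"
  by (simp add: vec_eq_iff mult_ac)

lemma kron_msc_right: "kron A (msc c B) = msc c (kron A B)"
  by (simp add: vec_eq_iff mult_ac)

lemma kron_scaleR_right: "kron A (c *\<^sub>R B) = c *\<^sub>R kron A B"
  by (simp flip: msc_of_real add: kron_msc_right)

definition vkron :: "complex^'a \<Rightarrow> complex^'b \<Rightarrow> complex^('a::finite \<times> 'b::finite)" where
  "vkron x y = (\<chi> p. x$fst p * y$snd p)"

lemma kron_outer: "kron (outer x) (outer y) = outer (vkron x y)"
  by (simp add: vec_eq_iff outer_def vkron_def mult_ac)

lemma psd_kron:
  fixes A :: "('a::finite) cmat" and B :: "('b::finite) cmat"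
  assumes "psd A" "psd B" shows "psd (kron A B)"
proof -
  obtain x where x: "A = (\<Sum>k\<in>(UNIV::'a set). outer (x k))"
    using psd_sum_outer[OF assms(1)] by blast
  obtain y where y: "B = (\<Sum>k\<in>(UNIV::'b set). outer (y k))"
    using psd_sum_outer[OF assms(2)] by blast
  have "kron A B = (\<Sum>m\<in>UNIV. \<Sum>k\<in>UNIV. outer (vkron (x k) (y m)))"
    unfolding x y kron_sum_left kron_sum_right kron_outer ..
  then show ?thesis by (simp add: psd_sum psd_outer)
qed

lemma sum_UNIV_pair: "(\<Sum>p\<in>UNIV. f p) = (\<Sum>a\<in>UNIV. \<Sum>b\<in>UNIV. f (a, b))"
  for f :: "'a::finite \<times> 'b::finite \<Rightarrow> 'c::comm_monoid_add"
  by (simp add: sum.cartesian_product)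

lemma trace_kron: "trace (kron A B) = trace A * trace B"
  unfolding trace_def by (simp add: sum_UNIV_pair sum_product)

lemma kron_in_dens: "\<rho> \<in> dens \<Longrightarrow> \<tau> \<in> dens \<Longrightarrow> kron \<rho> \<tau> \<in> dens"
  unfolding dens_def by (simp add: psd_kron trace_kron)

lemma trace_scaleR: "trace (c *\<^sub>R A) = complex_of_real c * trace A"
  unfolding trace_def by (simp add: scaleR_conv_of_real[where 'a=complex] sum_distrib_left)

lemma trace_sum: "trace (\<Sum>k\<in>S. A k) = (\<Sum>k\<in>S. trace (A k))"
  unfolding trace_def by (simp add: sum_component) (rule sum.swap)

lemma convex_dens: "convex dens"
  unfolding convex_def dens_def
  by (simp add: psd_add psd_scaleR trace_add trace_scaleR flip: of_real_add)

section \<open>Tensor products of linear maps\<close>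

lemma clin_add: "clin \<Phi> \<Longrightarrow> \<Phi> (A + B) = \<Phi> A + \<Phi> B"
  unfolding clin_def by blast

lemma clin_msc: "clin \<Phi> \<Longrightarrow> \<Phi> (msc c A) = msc c (\<Phi> A)"
  unfolding clin_def by blast

lemma clin_0: "clin \<Phi> \<Longrightarrow> \<Phi> 0 = 0"
  using clin_msc[of \<Phi> 0 0] by simp

lemma clin_sum: "clin \<Phi> \<Longrightarrow> \<Phi> (\<Sum>k\<in>S. A k) = (\<Sum>k\<in>S. \<Phi> (A k))"
  by (induction S rule: infinite_finite_induct) (simp_all add: clin_0 clin_add)

lemma clin_scaleR: "clin \<Phi> \<Longrightarrow> \<Phi> (c *\<^sub>R A) = c *\<^sub>R \<Phi> A"
  using clin_msc[of \<Phi> "complex_of_real c" A] by (simp add: msc_of_real)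

lemma munit_nth [simp]: "munit a b $ i $ j = (if i = a \<and> j = b then 1 else 0)"
  unfolding munit_def by simp

lemma sum_munit: "A = (\<Sum>a\<in>UNIV. \<Sum>a'\<in>UNIV. msc (A$a$a') (munit a a'))"
proof -
  have "A$a$a' * (if i = a \<and> j = a' then 1 else 0) = (if a' = j then (if a = i then A$i$j else 0) else 0)"
    for i j a a'
    by auto
  then show ?thesis by (simp add: vec_eq_iff)
qed

lemma clin_sum_munit: "clin \<Phi> \<Longrightarrow> \<Phi> A = (\<Sum>a\<in>UNIV. \<Sum>a'\<in>UNIV. msc (A$a$a') (\<Phi> (munit a a')))"
  by (subst sum_munit) (simp add: clin_sum clin_msc)

lemma tensor_map_kron:
  assumes "clin \<Phi>" "clin \<Psi>"
  shows "tensor_map \<Phi> \<Psi> (kron A B) = kron (\<Phi> A) (\<Psi> B)"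
proof -
  have "kron (\<Phi> A) (\<Psi> B) = (\<Sum>a\<in>UNIV. \<Sum>a'\<in>UNIV. \<Sum>b\<in>UNIV. \<Sum>b'\<in>UNIV.
      msc (A$a$a' * B$b$b') (kron (\<Phi> (munit a a')) (\<Psi> (munit b b'))))"
    unfolding clin_sum_munit[OF assms(1), of A] clin_sum_munit[OF assms(2), of B]
    by (simp only: kron_sum_left, simp only: kron_sum_right,
        simp only: kron_msc_left kron_msc_right msc_mult mult.commute)
  then show ?thesis
    unfolding tensor_map_def by (simp only: kron_nth fst_conv snd_conv)
qed

lemma linear_tensor_map: "linear (tensor_map \<Phi> \<Psi>)"
proof (rule linearI)
  show "tensor_map \<Phi> \<Psi> (X + Y) = tensor_map \<Phi> \<Psi> X + tensor_map \<Phi> \<Psi> Y" for X Y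
    unfolding tensor_map_def by (simp add: msc_add_left sum.distrib)
  show "tensor_map \<Phi> \<Psi> (c *\<^sub>R X) = c *\<^sub>R tensor_map \<Phi> \<Psi> X" for c X
    unfolding tensor_map_def by (simp add: msc_sum_right msc_mult flip: msc_of_real)
qed

lemma tensor_set_subset_tensor_map_image:
  assumes "clin \<Phi>" "clin \<Psi>"
  shows "tensor_set (\<Phi> ` dens) (\<Psi> ` dens) \<subseteq> tensor_map \<Phi> \<Psi> ` dens"
  unfolding tensor_set_def
proof (rule hull_minimal)
  show "convex (tensor_map \<Phi> \<Psi> ` dens)"
    by (rule convex_linear_image[OF linear_tensor_map convex_dens])
  show "{kron X Y |X Y. X \<in> \<Phi> ` dens \<and> Y \<in> \<Psi> ` dens} \<subseteq> tensor_map \<Phi> \<Psi> ` dens"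
  proof
    fix Z assume "Z \<in> {kron X Y |X Y. X \<in> \<Phi> ` dens \<and> Y \<in> \<Psi> ` dens}"
    then obtain \<rho> \<tau> where "\<rho> \<in> dens" "\<tau> \<in> dens" "Z = kron (\<Phi> \<rho>) (\<Psi> \<tau>)"
      by blast
    then show "Z \<in> tensor_map \<Phi> \<Psi> ` dens"
      using tensor_map_kron[OF assms] kron_in_dens by (metis image_eqI)
  qed
qed

section \<open>Entanglement-breaking channels\<close>

text \<open>\<open>ptr M \<rho> = Tr\<^sub>1[\<rho> (M \<otimes> 1)]\<close>: the unnormalised state left on the second factor
  after outcome \<open>M\<close> of a measurement on the first.\<close>
definition ptr :: "('a::finite) cmat \<Rightarrow> ('a \<times> 'b::finite) cmat \<Rightarrow> 'b cmat" where
  "ptr M \<rho> = (\<chi> b b'. \<Sum>a\<in>UNIV. \<Sum>a'\<in>UNIV. \<rho>$(a,b)$(a',b') * M$a'$a)"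

lemma ptr_sum: "ptr (\<Sum>k\<in>S. A k) \<rho> = (\<Sum>k\<in>S. ptr (A k) \<rho>)"
  unfolding ptr_def by (simp add: vec_eq_iff sum_distrib_left sum.swap[of _ S])

lemma qf_ptr_outer: "qf (ptr (outer x) \<rho>) u u = qf \<rho> (vkron x u) (vkron x u)"
proof -
  define T where "T a b a' b' = cnj (x$a) * cnj (u$b) * \<rho>$(a,b)$(a',b') * x$a' * u$b'" for a b a' b'
  have "qf (ptr (outer x) \<rho>) u u = (\<Sum>b\<in>UNIV. \<Sum>b'\<in>UNIV. \<Sum>a\<in>UNIV. \<Sum>a'\<in>UNIV. T a b a' b')"
    unfolding qf_def ptr_def T_def outer_def by (simp add: sum_distrib_left sum_distrib_right mult_ac)
  also have "\<dots> = (\<Sum>b\<in>UNIV. \<Sum>a\<in>UNIV. \<Sum>a'\<in>UNIV. \<Sum>b'\<in>UNIV. T a b a' b')"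
    by (intro sum.cong refl, subst sum.swap) (intro sum.cong refl sum.swap)
  also have "\<dots> = (\<Sum>a\<in>UNIV. \<Sum>b\<in>UNIV. \<Sum>a'\<in>UNIV. \<Sum>b'\<in>UNIV. T a b a' b')"
    by (rule sum.swap)
  also have "\<dots> = qf \<rho> (vkron x u) (vkron x u)"
    unfolding qf_def vkron_def T_def sum_UNIV_pair by (simp add: sum_distrib_left sum_distrib_right mult_ac)
  finally show ?thesis .
qed

lemma psd_ptr:
  fixes M :: "('a::finite) cmat" and \<rho> :: "('a \<times> 'b::finite) cmat"
  assumes "psd M" "psd \<rho>" shows "psd (ptr M \<rho>)"
proof -
  obtain x where x: "M = (\<Sum>k\<in>(UNIV::'a set). outer (x k))"
    using psd_sum_outer[OF assms(1)] by blast
  have "psd (ptr (outer (x k)) \<rho>)" for k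
    using assms(2) unfolding psd_qf qf_ptr_outer by blast
  then show ?thesis unfolding x ptr_sum by (simp add: psd_sum)
qed

lemma trace_ptr_mat_1: "trace (ptr (mat 1) \<rho>) = trace \<rho>"
proof -
  have diag: "ptr (mat 1) \<rho> $ b $ b = (\<Sum>a\<in>UNIV. \<rho>$(a,b)$(a,b))" for b
    unfolding ptr_def mat_def by (simp add: mult_delta_right cong: if_cong)
  show ?thesis
    unfolding trace_def diag sum_UNIV_pair by (rule sum.swap)
qed

lemma psd_eq_scaleR_dens:
  assumes "psd A" shows "\<exists>\<rho>\<in>dens. A = Re (trace A) *\<^sub>R \<rho>"
proof (cases "trace A = 0")
  case True
  then show ?thesis using psd_trace_eq_0[OF assms] dens_nonempty by auto
next
  case False
  with psd_trace_nonneg[OF assms] have "Re (trace A) > 0"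
    by (metis complex_eq_iff less_eq_real_def zero_complex.simps)
  moreover have "trace A = complex_of_real (Re (trace A))"
    using psd_trace_nonneg[OF assms] by (simp add: complex_eq_iff)
  ultimately have "(1 / Re (trace A)) *\<^sub>R A \<in> dens"
    unfolding dens_def using assms False by (simp add: psd_scaleR trace_scaleR flip: of_real_mult)
  with \<open>Re (trace A) > 0\<close> show ?thesis by force
qed

lemma trace_munit_mult: "trace (munit a a' ** M) = M$a'$a"
proof -
  have "(if i = a \<and> k = a' then 1 else 0) * M$k$i = (if k = a' then (if i = a then M$a'$a else 0) else 0)"
    for i k
    by auto
  then show ?thesis
    unfolding trace_def matrix_matrix_mult_def by simp
qed

lemma clin_eb:
  fixes M :: "nat \<Rightarrow> ('p::finite) cmat"
  assumes "\<forall>X. Xi X = (\<Sum>t<l. msc (trace (X ** M t)) (\<sigma> t))"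
  shows "clin Xi"
proof -
  have add: "trace ((A + B) ** C) = trace (A ** C) + trace (B ** C)" for A B C :: "'p cmat"
    unfolding trace_def matrix_matrix_mult_def by (simp add: algebra_simps sum.distrib)
  have msc: "trace (msc c A ** C) = c * trace (A ** C)" for c A and C :: "'p cmat"
    unfolding trace_def matrix_matrix_mult_def by (simp add: sum_distrib_left mult_ac)
  show ?thesis unfolding clin_def assms[rule_format] add msc
    by (simp add: msc_add_left sum.distrib msc_sum_right msc_mult)
qed

lemma ptr_eq_sum_blocks: "ptr M \<rho> = (\<Sum>a\<in>UNIV. \<Sum>a'\<in>UNIV. msc (M$a'$a) (\<chi> b b'. \<rho>$(a,b)$(a',b')))"
  unfolding ptr_def by (simp add: vec_eq_iff mult.commute)

lemma tensor_map_eb: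
  fixes Psi :: "('N::finite) cmat \<Rightarrow> ('k::finite) cmat"
  assumes Xi: "\<forall>X. Xi X = (\<Sum>t<l. msc (trace (X ** M t)) (\<sigma> t))" and "clin Psi"
  shows "tensor_map Xi Psi \<rho> = (\<Sum>t<l. kron (\<sigma> t) (Psi (ptr (M t) \<rho>)))"
proof -
  define F where "F t a a' b b' =
    msc (M t $a'$a * \<rho>$(a,b)$(a',b')) (kron (\<sigma> t) (Psi (munit b b')))" for t a a' b b'
  have "tensor_map Xi Psi \<rho> = (\<Sum>a\<in>UNIV. \<Sum>a'\<in>UNIV. \<Sum>b\<in>UNIV. \<Sum>b'\<in>UNIV. \<Sum>t<l. F t a a' b b')"
    unfolding tensor_map_def F_def Xi[rule_format] trace_munit_mult
    by (simp only: kron_sum_left kron_msc_left msc_sum_right msc_mult mult.commute)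
  also have "\<dots> = (\<Sum>t<l. \<Sum>a\<in>UNIV. \<Sum>a'\<in>UNIV. \<Sum>b\<in>UNIV. \<Sum>b'\<in>UNIV. F t a a' b b')"
    by (simp only: sum.swap[where B="{..<l}"])
  also have "\<dots> = (\<Sum>t<l. kron (\<sigma> t) (Psi (ptr (M t) \<rho>)))"
    unfolding F_def ptr_eq_sum_blocks clin_sum[OF \<open>clin Psi\<close>] clin_msc[OF \<open>clin Psi\<close>]
      clin_sum_munit[OF \<open>clin Psi\<close>, of "\<chi> b b'. \<rho>$(_,b)$(_,b')"]
    by (simp only: vec_lambda_beta kron_sum_right kron_msc_right msc_sum_right msc_mult)
  finally show ?thesis .
qed

lemma sum_trace_ptr_povm:
  assumes "povm l M" shows "(\<Sum>t<l. trace (ptr (M t) \<rho>)) = trace \<rho>"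
  using assms unfolding povm_def
  by (simp add: trace_ptr_mat_1 flip: trace_sum ptr_sum)

lemma tensor_map_eb_image_subset:
  assumes "povm l M" and Xi: "\<forall>X. Xi X = (\<Sum>t<l. msc (trace (X ** M t)) (\<sigma> t))"
    and "clin Psi" and \<sigma>: "\<forall>t<l. \<sigma> t \<in> Xi ` dens"
  shows "tensor_map Xi Psi ` dens \<subseteq> tensor_set (Xi ` dens) (Psi ` dens)"
proof
  fix Z assume "Z \<in> tensor_map Xi Psi ` dens"
  then obtain \<rho> where "\<rho> \<in> dens" and Z: "Z = tensor_map Xi Psi \<rho>" by auto
  define w where "w t = Re (trace (ptr (M t) \<rho>))" for t
  have psd_ptr_M: "psd (ptr (M t) \<rho>)" if "t < l" for t
    using psd_ptr \<open>povm l M\<close> \<open>\<rho> \<in> dens\<close> that unfolding povm_def dens_def by blast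
  then have "\<forall>t\<in>{..<l}. \<exists>\<tau>\<in>dens. ptr (M t) \<rho> = w t *\<^sub>R \<tau>"
    unfolding w_def by (simp add: psd_eq_scaleR_dens)
  then obtain \<tau> where \<tau>: "\<And>t. t < l \<Longrightarrow> \<tau> t \<in> dens \<and> ptr (M t) \<rho> = w t *\<^sub>R \<tau> t"
    by (metis lessThan_iff)
  have w_nonneg: "w t \<ge> 0" if "t \<in> {..<l}" for t
    using psd_trace_nonneg(2)[OF psd_ptr_M] that unfolding w_def by simp
  have w_sum: "(\<Sum>t<l. w t) = 1"
    using arg_cong[OF sum_trace_ptr_povm[OF \<open>povm l M\<close>, of \<rho>], of Re] \<open>\<rho> \<in> dens\<close>
    unfolding w_def dens_def by simp
  have Z_sum: "Z = (\<Sum>t<l. w t *\<^sub>R kron (\<sigma> t) (Psi (\<tau> t)))"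
    unfolding Z tensor_map_eb[OF Xi \<open>clin Psi\<close>]
    by (intro sum.cong refl) (simp add: \<tau> clin_scaleR[OF \<open>clin Psi\<close>] kron_scaleR_right)
  have mem: "kron (\<sigma> t) (Psi (\<tau> t)) \<in> convex hull {kron X Y |X Y. X \<in> Xi ` dens \<and> Y \<in> Psi ` dens}"
    if "t \<in> {..<l}" for t
    using \<sigma> \<tau> that by (intro hull_inc) blast
  show "Z \<in> tensor_set (Xi ` dens) (Psi ` dens)"
    unfolding tensor_set_def Z_sum
    by (rule convex_sum[OF finite_lessThan convex_convex_hull w_sum w_nonneg mem])
qed

section \<open>Norm-one POVM elements\<close>

lemma povm_sum_qf:
  assumes "povm l M" shows "(\<Sum>s<l. qf (M s) u u) = complex_of_real ((norm u)^2)"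
  using assms unfolding povm_def by (simp flip: qf_sum_mat add: qf_mat_1_eq_norm)

lemma povm_sum_Re_qf:
  assumes "povm l M" shows "(\<Sum>s<l. Re (qf (M s) u u)) = (norm u)^2"
  using arg_cong[OF povm_sum_qf[OF assms, of u], of Re] by simp

lemma povm_Re_qf_le:
  assumes "povm l M" "t < l" shows "Re (qf (M t) u u) \<le> (norm u)^2"
proof -
  have "Re (qf (M t) u u) \<le> (\<Sum>s<l. Re (qf (M s) u u))"
    using assms unfolding povm_def psd_qf by (intro member_le_sum) auto
  then show ?thesis using povm_sum_Re_qf[OF assms(1)] by simp
qed

lemma opnorm_attained: "\<exists>v. norm v = 1 \<and> norm (A *v v) = opnorm A"
  for A :: "('n::finite) cmat"
proof -
  let ?S = "sphere (0::complex^'n) 1"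
  have "continuous_on ?S (\<lambda>v. norm (A *v v))"
    by (intro continuous_intros linear_continuous_on matrix_vector_mul_bounded_linear)
  moreover have "?S \<noteq> {}" by simp
  ultimately obtain v where v: "v \<in> ?S" "\<And>y. y \<in> ?S \<Longrightarrow> norm (A *v y) \<le> norm (A *v v)"
    using continuous_attains_sup[OF compact_sphere] by blast
  have "opnorm A \<le> norm (A *v v)"
    unfolding opnorm_def
  proof (rule onorm_le)
    fix x :: "complex^'n"
    show "norm (A *v x) \<le> norm (A *v v) * norm x"
    proof (cases "x = 0")
      case False
      then have "norm (A *v ((1 / norm x) *\<^sub>R x)) \<le> norm (A *v v)"
        by (intro v(2)) simp
      then show ?thesis using False
        by (simp add: linear_scale[OF bounded_linear.linear[OF matrix_vector_mul_bounded_linear]]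
            divide_le_eq mult.commute)
    qed simp
  qed
  moreover have "norm (A *v v) \<le> opnorm A"
    using onorm[OF matrix_vector_mul_bounded_linear[of A], of v] v(1) unfolding opnorm_def by simp
  ultimately show ?thesis using v(1) by (intro exI[of _ v]) simp
qed

lemma qf_mult_vector:
  assumes "psd A" shows "qf A v (A *v v) = complex_of_real ((norm (A *v v))^2)"
proof -
  have "cnj ((A *v v)$j) = (\<Sum>i\<in>UNIV. cnj (v$i) * A$i$j)" for j
    unfolding matrix_vector_mult_def by (simp add: psd_hermitian[OF assms, symmetric] mult.commute)
  then have "qf A v (A *v v) = (\<Sum>j\<in>UNIV. cnj ((A *v v)$j) * (A *v v)$j)"
    unfolding qf_def by (subst sum.swap) (simp add: sum_distrib_right)
  then show ?thesis by (metis qf_mat_1 qf_mat_1_eq_norm)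
qed

text \<open>A norm-one vector \<open>y = M\<^sub>t v\<close> gives \<open>1 = \<langle>v, M\<^sub>t y\<rangle>\<^sup>2 \<le> \<langle>v, M\<^sub>t v\<rangle>\<langle>y, M\<^sub>t y\<rangle>\<close>, and both
  factors are at most one because \<open>M\<^sub>t \<le> 1\<close>; the remaining elements then vanish on \<open>v\<close>
  as the diagonal values \<open>\<langle>v, M\<^sub>s v\<rangle>\<close> sum to one.\<close>
lemma povm_norm_one_vector:
  assumes "povm l M" "t < l" "opnorm (M t) = 1"
  obtains v where "norm v = 1" "qf (M t) v v = 1" "\<And>s. s < l \<Longrightarrow> s \<noteq> t \<Longrightarrow> qf (M s) v v = 0"
proof -
  have psd_M: "psd (M s)" if "s < l" for s
    using assms(1) that unfolding povm_def by blast
  obtain v where v: "norm v = 1" "norm (M t *v v) = 1"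
    using opnorm_attained[of "M t"] assms(3) by auto
  define y where "y = M t *v v"
  have "1 \<le> Re (qf (M t) v v) * Re (qf (M t) y y)"
    using psd_cauchy_schwarz[OF psd_M[OF assms(2)], of v y]
    unfolding y_def qf_mult_vector[OF psd_M[OF assms(2)]] v(2) by simp
  moreover have "Re (qf (M t) y y) \<le> 1" "Re (qf (M t) v v) \<le> 1"
    using povm_Re_qf_le[OF assms(1,2)] v y_def by (metis power_one)+
  moreover have "Re (qf (M t) v v) \<ge> 0" "Im (qf (M t) v v) = 0"
    using psd_M[OF assms(2)] unfolding psd_qf by auto
  ultimately have qf_t: "qf (M t) v v = 1"
    by (simp add: complex_eq_iff) (metis mult_left_le order_antisym order_trans)
  have "(\<Sum>s<l. Re (qf (M s) v v)) = Re (qf (M t) v v) + (\<Sum>s\<in>{..<l}-{t}. Re (qf (M s) v v))"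
    using assms(2) by (simp add: sum.remove)
  then have "(\<Sum>s\<in>{..<l}-{t}. Re (qf (M s) v v)) = 0"
    using povm_sum_Re_qf[OF assms(1), of v] qf_t v(1) by simp
  then have "Re (qf (M s) v v) = 0" if "s < l" "s \<noteq> t" for s
    using that psd_M by (subst (asm) sum_nonneg_eq_0_iff) (auto simp: psd_qf)
  moreover have "Im (qf (M s) v v) = 0" if "s < l" for s
    using psd_M[OF that] unfolding psd_qf by blast
  ultimately show ?thesis
    using that v(1) qf_t by (simp add: complex_eq_iff)
qed

lemma eb_output_in_image:
  assumes "povm l M" "t < l" "opnorm (M t) = 1"
    and Xi: "\<forall>X. Xi X = (\<Sum>s<l. msc (trace (X ** M s)) (\<sigma> s))"
  shows "\<sigma> t \<in> Xi ` dens"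
proof -
  obtain v where v: "norm v = 1" "qf (M t) v v = 1" "\<And>s. s < l \<Longrightarrow> s \<noteq> t \<Longrightarrow> qf (M s) v v = 0"
    using povm_norm_one_vector[OF assms(1-3)] by blast
  have "Xi (outer v) = (\<Sum>s<l. if s = t then \<sigma> s else 0)"
    unfolding Xi[rule_format] trace_outer_mult by (intro sum.cong refl) (simp add: v)
  also have "\<dots> = \<sigma> t"
    using assms(2) by simp
  finally show ?thesis
    using outer_in_dens[OF v(1)] by (metis image_eqI)
qed

theorem theorem8p7:
  fixes Xi :: "('p::finite) cmat \<Rightarrow> ('q::finite) cmat"
    and Psi :: "('N::finite) cmat \<Rightarrow> ('k::finite) cmat"
    and l :: nat and M :: "nat \<Rightarrow> 'p cmat" and \<sigma> :: "nat \<Rightarrow> 'q cmat"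
  assumes "povm l M"
    and "\<forall>t<l. opnorm (M t) = 1"
    and "\<forall>t<l. \<sigma> t \<in> dens"
    and "\<forall>X. Xi X = (\<Sum>t<l. msc (trace (X ** M t)) (\<sigma> t))"
    and "channel Psi"
  shows "tensor_map Xi Psi ` dens = tensor_set (Xi ` dens) (Psi ` dens)"
proof (rule antisym)
  have "clin Psi"
    using assms(5) unfolding channel_def by blast
  moreover have "\<forall>t<l. \<sigma> t \<in> Xi ` dens"
    using eb_output_in_image[OF assms(1) _ _ assms(4)] assms(2) by blast
  ultimately show "tensor_map Xi Psi ` dens \<subseteq> tensor_set (Xi ` dens) (Psi ` dens)"
    by (rule tensor_map_eb_image_subset[OF assms(1,4)])
  show "tensor_set (Xi ` dens) (Psi ` dens) \<subseteq> tensor_map Xi Psi ` dens"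
    by (rule tensor_set_subset_tensor_map_image[OF clin_eb[OF assms(4)] \<open>clin Psi\<close>])
qed

end
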